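(* Let $(\Omega,\Sigma,\mu)$ be a finite measure space, let $X(\mu)$ be a strictly rectangular function space, let $f\in L^0(\mu)$ with $f\ge0$, and let $A_1,\dots,A_n\in\Sigma_f$ be pairwise disjoint. If $0\le a_j\le b_j$ for $j=1,\dots,n$, then $$\Big\|\sum_{j=1}^n a_j\chi_{A_j}f\Big\|\le\Big\|\sum_{j=1}^n b_j\chi_{A_j}f\Big\|.$$
   Context: $L^0(\mu)$ is the space of equivalence classes (modulo $\mu$-a.e. equality) of real $\Sigma$-measurable functions. A strictly rectangular function space is a vector subspace $X(\mu)\subseteq L^0(\mu)$ with a norm such that $\chi_Ah\in X(\mu)$ and $\|\chi_Ah\|\le\|h\|$ for all $h\in X(\mu)$, $A\in\Sigma$. $\Sigma_f=\{A\in\Sigma: f\chi_A\in X(\mu)\}$. *)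

theory Defs
  imports "HOL-Analysis.Analysis"
begin

text \<open>Elements of L^0(mu) are represented by real-valued measurable functions;
  equivalence classes are modelled by requiring X to be closed under a.e. equality
  and the norm N to be invariant under a.e. equality.\<close>

definition L0 :: "'a measure \<Rightarrow> ('a \<Rightarrow> real) set" where
  "L0 M = borel_measurable M"

definition strictly_rectangular ::
  "'a measure \<Rightarrow> ('a \<Rightarrow> real) set \<Rightarrow> (('a \<Rightarrow> real) \<Rightarrow> real) \<Rightarrow> bool" where
  "strictly_rectangular M X N \<longleftrightarrow>
     \<comment> \<open>X is a set of classes in L^0\<close>
     X \<subseteq> L0 M \<and>
     (\<forall>h\<in>X. \<forall>g\<in>L0 M. (AE x in M. g x = h x) \<longrightarrow> g \<in> X) \<and>
     (\<forall>h\<in>X. \<forall>g\<in>X. (AE x in M. g x = h x) \<longrightarrow> N g = N h) \<and>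
     \<comment> \<open>vector subspace\<close>
     (\<lambda>x. 0) \<in> X \<and>
     (\<forall>h\<in>X. \<forall>g\<in>X. (\<lambda>x. h x + g x) \<in> X) \<and>
     (\<forall>h\<in>X. \<forall>c::real. (\<lambda>x. c * h x) \<in> X) \<and>
     \<comment> \<open>N is a norm on the quotient\<close>
     (\<forall>h\<in>X. 0 \<le> N h) \<and>
     (\<forall>h\<in>X. N h = 0 \<longleftrightarrow> (AE x in M. h x = 0)) \<and>
     (\<forall>h\<in>X. \<forall>c::real. N (\<lambda>x. c * h x) = \<bar>c\<bar> * N h) \<and>
     (\<forall>h\<in>X. \<forall>g\<in>X. N (\<lambda>x. h x + g x) \<le> N h + N g) \<and>
     \<comment> \<open>strict rectangularity\<close>
     (\<forall>h\<in>X. \<forall>A\<in>sets M. (\<lambda>x. indicator A x * h x) \<in> X \<and>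
                           N (\<lambda>x. indicator A x * h x) \<le> N h)"

definition Sigma_f ::
  "'a measure \<Rightarrow> ('a \<Rightarrow> real) set \<Rightarrow> ('a \<Rightarrow> real) \<Rightarrow> 'a set set" where
  "Sigma_f M X f = {A \<in> sets M. (\<lambda>x. f x * indicator A x) \<in> X}"

end

theory Submission
  imports Defs
begin

text \<open>Raise the coefficients one at a time. If w is the sum after raising the k-th
  coefficient from c_k to t > 0, then, the A_j being disjoint, the sum before is
  w - s \<chi>(A_k) w with s = 1 - c_k / t in [0,1]. On \<Omega> this is the convex combination
  (1 - s) w + s \<chi>(\<Omega> - A_k) w, whose norm is at most N w by the triangle inequality and
  strict rectangularity.\<close>

lemma strictly_rectangular_add:
  "strictly_rectangular M X N \<Longrightarrow> h \<in> X \<Longrightarrow> g \<in> X \<Longrightarrow> (\<lambda>x. h x + g x) \<in> X"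
  unfolding strictly_rectangular_def by blast

lemma strictly_rectangular_scale:
  "strictly_rectangular M X N \<Longrightarrow> h \<in> X \<Longrightarrow> (\<lambda>x. c * h x) \<in> X"
  unfolding strictly_rectangular_def by blast

lemma strictly_rectangular_indicator_mult:
  "strictly_rectangular M X N \<Longrightarrow> h \<in> X \<Longrightarrow> A \<in> sets M \<Longrightarrow> (\<lambda>x. indicator A x * h x) \<in> X"
  unfolding strictly_rectangular_def by blast

lemma strictly_rectangular_norm_indicator_mult_le:
  "strictly_rectangular M X N \<Longrightarrow> h \<in> X \<Longrightarrow> A \<in> sets M \<Longrightarrow> N (\<lambda>x. indicator A x * h x) \<le> N h"
  unfolding strictly_rectangular_def by blast

lemma strictly_rectangular_norm_scale:
  "strictly_rectangular M X N \<Longrightarrow> h \<in> X \<Longrightarrow> N (\<lambda>x. c * h x) = \<bar>c\<bar> * N h"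
  unfolding strictly_rectangular_def by blast

lemma strictly_rectangular_norm_triangle:
  "strictly_rectangular M X N \<Longrightarrow> h \<in> X \<Longrightarrow> g \<in> X \<Longrightarrow> N (\<lambda>x. h x + g x) \<le> N h + N g"
  unfolding strictly_rectangular_def by blast

lemma strictly_rectangular_norm_AE_cong:
  "strictly_rectangular M X N \<Longrightarrow> h \<in> X \<Longrightarrow> g \<in> X \<Longrightarrow> (AE x in M. g x = h x) \<Longrightarrow> N g = N h"
  unfolding strictly_rectangular_def by blast

lemma strictly_rectangular_norm_diff_indicator_mult_le:
  assumes sr: "strictly_rectangular M X N" and w: "w \<in> X" and C: "C \<in> sets M"
    and s: "0 \<le> s" "s \<le> 1"
  shows "N (\<lambda>x. w x - s * (indicator C x * w x)) \<le> N w"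
proof -
  let ?g = "\<lambda>x. w x - s * (indicator C x * w x)"
  let ?v = "\<lambda>x. indicator (space M - C) x * w x"
  let ?h = "\<lambda>x. (1 - s) * w x + s * ?v x"
  have C': "space M - C \<in> sets M" using C by blast
  have v: "?v \<in> X" "N ?v \<le> N w"
    using strictly_rectangular_indicator_mult[OF sr w C']
      strictly_rectangular_norm_indicator_mult_le[OF sr w C'] by auto
  have ws: "(\<lambda>x. (1 - s) * w x) \<in> X" and vs: "(\<lambda>x. s * ?v x) \<in> X"
    using strictly_rectangular_scale[OF sr] w v by auto
  have "(\<lambda>x. w x + (- s) * (indicator C x * w x)) \<in> X"
    by (intro strictly_rectangular_add[OF sr w] strictly_rectangular_scale[OF sr]
        strictly_rectangular_indicator_mult[OF sr w C])
  then have g: "?g \<in> X" by simp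
  have "AE x in M. ?g x = ?h x"
    by (rule AE_I2) (simp add: indicator_def algebra_simps)
  then have "N ?g = N ?h"
    using strictly_rectangular_norm_AE_cong[OF sr strictly_rectangular_add[OF sr ws vs] g] by simp
  also have "\<dots> \<le> N (\<lambda>x. (1 - s) * w x) + N (\<lambda>x. s * ?v x)"
    by (rule strictly_rectangular_norm_triangle[OF sr ws vs])
  also have "\<dots> = (1 - s) * N w + s * N ?v"
    using strictly_rectangular_norm_scale[OF sr] w v s by simp
  also have "\<dots> \<le> (1 - s) * N w + s * N w"
    using v s by (simp add: mult_left_mono)
  finally show ?thesis by (simp add: algebra_simps)
qed

lemma sum_indicator_mult_in_X:
  assumes sr: "strictly_rectangular M X N" and "finite I"
    and "\<forall>j\<in>I. A j \<in> Sigma_f M X f"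
  shows "(\<lambda>x. \<Sum>j\<in>I. c j * indicator (A j) x * f x) \<in> X"
  using assms(2,3)
proof (induction I rule: finite_induct)
  case empty
  then show ?case using sr unfolding strictly_rectangular_def by simp
next
  case (insert k I)
  have "(\<lambda>x. f x * indicator (A k) x) \<in> X"
    using insert.prems unfolding Sigma_f_def by auto
  then have "(\<lambda>x. c k * (f x * indicator (A k) x)) \<in> X"
    by (rule strictly_rectangular_scale[OF sr])
  then have "(\<lambda>x. c k * indicator (A k) x * f x) \<in> X"
    by (simp add: ac_simps)
  with insert show ?case by (simp add: strictly_rectangular_add[OF sr])
qed

lemma norm_sum_indicator_mult_mono_single:
  assumes sr: "strictly_rectangular M X N" and I: "finite I"
    and A: "\<forall>j\<in>I. A j \<in> Sigma_f M X f" and disj: "disjoint_family_on A I"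
    and k: "k \<in> I" and c: "0 \<le> c k" "c k \<le> t"
  shows "N (\<lambda>x. \<Sum>j\<in>I. c j * indicator (A j) x * f x)
         \<le> N (\<lambda>x. \<Sum>j\<in>I. (c(k := t)) j * indicator (A j) x * f x)"
proof (cases "t = 0")
  case True
  with c have "c(k := t) = c" by (auto simp: fun_eq_iff)
  then show ?thesis by simp
next
  case False
  with c have t: "t > 0" by simp
  define s where "s = 1 - c k / t"
  have s: "0 \<le> s" "s \<le> 1" using c t unfolding s_def by auto
  let ?w = "\<lambda>x. \<Sum>j\<in>I. (c(k := t)) j * indicator (A j) x * f x"
  have split: "(\<Sum>j\<in>I. d j * indicator (A j) x * f x)
      = d k * indicator (A k) x * f x + (\<Sum>j\<in>I - {k}. d j * indicator (A j) x * f x)" for d x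
    using I k by (rule sum.remove)
  have rest_cong: "(\<Sum>j\<in>I - {k}. (c(k := t)) j * indicator (A j) x * f x)
      = (\<Sum>j\<in>I - {k}. c j * indicator (A j) x * f x)" for x
    by (rule sum.cong) auto
  have rest_zero: "(\<Sum>j\<in>I - {k}. c j * indicator (A j) x * f x) = 0" if "x \<in> A k" for x
  proof -
    have "x \<notin> A j" if "j \<in> I - {k}" for j
      using disj k \<open>x \<in> A k\<close> that unfolding disjoint_family_on_def by blast
    then show ?thesis by (auto intro!: sum.neutral)
  qed
  have "(\<lambda>x. \<Sum>j\<in>I. c j * indicator (A j) x * f x)
      = (\<lambda>x. ?w x - s * (indicator (A k) x * ?w x))"
  proof
    fix x
    show "(\<Sum>j\<in>I. c j * indicator (A j) x * f x) = ?w x - s * (indicator (A k) x * ?w x)"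
      using split[of c x] split[of "c(k := t)" x] rest_cong[of x] rest_zero[of x] t
      by (cases "x \<in> A k") (simp_all add: s_def algebra_simps)
  qed
  moreover have "A k \<in> sets M" using A k unfolding Sigma_f_def by auto
  ultimately show ?thesis
    using strictly_rectangular_norm_diff_indicator_mult_le[OF sr
        sum_indicator_mult_in_X[OF sr I A] _ s] by simp
qed

lemma norm_sum_indicator_mult_mono:
  assumes sr: "strictly_rectangular M X N" and I: "finite I"
    and A: "\<forall>j\<in>I. A j \<in> Sigma_f M X f" and disj: "disjoint_family_on A I"
    and ab: "\<forall>j\<in>I. 0 \<le> a j \<and> a j \<le> b j"
  shows "N (\<lambda>x. \<Sum>j\<in>I. a j * indicator (A j) x * f x)
         \<le> N (\<lambda>x. \<Sum>j\<in>I. b j * indicator (A j) x * f x)"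
proof -
  have "N (\<lambda>x. \<Sum>j\<in>I. a j * indicator (A j) x * f x)
        \<le> N (\<lambda>x. \<Sum>j\<in>I. (if j \<in> S then b j else a j) * indicator (A j) x * f x)"
    if "S \<subseteq> I" for S
    using finite_subset[OF that I] that
  proof (induction S rule: finite_induct)
    case empty
    then show ?case by simp
  next
    case (insert k S)
    let ?c = "\<lambda>j. if j \<in> S then b j else a j"
    have k: "k \<in> I" and "S \<subseteq> I" using insert.prems by auto
    have "?c(k := b k) = (\<lambda>j. if j \<in> insert k S then b j else a j)"
      by (auto simp: fun_eq_iff)
    moreover have "0 \<le> ?c k" "?c k \<le> b k" using ab k insert.hyps(2) by auto
    ultimately show ?case
      using insert.IH[OF \<open>S \<subseteq> I\<close>]
        norm_sum_indicator_mult_mono_single[OF sr I A disj k, of ?c "b k"]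
      by simp
  qed
  from this[OF order_refl] show ?thesis by simp
qed

theorem lemma3p3:
  fixes M :: "'a measure" and X :: "('a \<Rightarrow> real) set" and N :: "('a \<Rightarrow> real) \<Rightarrow> real"
    and f :: "'a \<Rightarrow> real" and n :: nat and A :: "nat \<Rightarrow> 'a set" and a b :: "nat \<Rightarrow> real"
  assumes "finite_measure M"
    and "strictly_rectangular M X N"
    and "f \<in> L0 M" and "AE x in M. 0 \<le> f x"
    and "\<forall>j\<in>{1..n}. A j \<in> Sigma_f M X f"
    and "disjoint_family_on A {1..n}"
    and "\<forall>j\<in>{1..n}. 0 \<le> a j \<and> a j \<le> b j"
  shows "N (\<lambda>x. \<Sum>j=1..n. a j * indicator (A j) x * f x)
         \<le> N (\<lambda>x. \<Sum>j=1..n. b j * indicator (A j) x * f x)"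
  using norm_sum_indicator_mult_mono[OF assms(2) finite_atLeastAtMost assms(5-7)] .

end
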